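(* Let $n_1,n_1',n_2,n_2'\in\mathbb{N}$. For $i=1,2$ let $\phi_i:\mathbb{N}^{n_i}\to\mathbb{N}^{n_i'}$ be monotonic maps that change the Stanley depth by $\ell_i$ with respect to $g_i\in\mathbb{N}^{n_i}$ and $g_i'\in\mathbb{N}^{n_i'}$. Then the product map $(\phi_1,\phi_2):\mathbb{N}^{n_1+n_2}\to\mathbb{N}^{n_1'+n_2'}$, $(a,b)\mapsto(\phi_1(a),\phi_2(b))$, changes the Stanley depth by $\ell_1+\ell_2$ with respect to $(g_1,g_2)$ and $(g_1',g_2')$.
   Context: $\mathbb{N}^n$ carries the componentwise partial order; $[a,b]=\{c: a\le c\le b\}$; a map is monotonic if it preserves this order. A monotonic map $\phi:\mathbb{N}^n\to\mathbb{N}^{n'}$ changes the Stanley depth by $\ell\in\mathbb{Z}$ with respect to $g\in\mathbb{N}^n$ and $g'\in\mathbb{N}^{n'}$ if (1) $\phi(g)\le g'$, and (2) for every interval $[a',b']\subset[0,g']$, the set $\phi^{-1}([a',b'])\cap[0,g]$ is a finite disjoint union $\bigcup_i[a^i,b^i]$ of intervals with $\#\{j\in[n]: b^i_j=g_j\}\ge\#\{j\in[n']: b'_j=g'_j\}+\ell$ for all $i$. *)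

theory Defs
  imports Main
begin

text \<open>Elements of \<open>\<nat>^n\<close> are represented as lists of naturals of length n.
  The componentwise order is \<open>list_all2 (\<le>)\<close>.\<close>

definition vle :: "nat list \<Rightarrow> nat list \<Rightarrow> bool" where
  "vle a b \<longleftrightarrow> list_all2 (\<le>) a b"

definition intv :: "nat \<Rightarrow> nat list \<Rightarrow> nat list \<Rightarrow> nat list set" where
  "intv n a b = {c. length c = n \<and> vle a c \<and> vle c b}"

definition zerov :: "nat \<Rightarrow> nat list" where
  "zerov n = replicate n 0"

definition mono_map :: "nat \<Rightarrow> nat \<Rightarrow> (nat list \<Rightarrow> nat list) \<Rightarrow> bool" where
  "mono_map n n' \<phi> \<longleftrightarrow>
     (\<forall>a. length a = n \<longrightarrow> length (\<phi> a) = n') \<and>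
     (\<forall>a b. length a = n \<longrightarrow> length b = n \<longrightarrow> vle a b \<longrightarrow> vle (\<phi> a) (\<phi> b))"

definition ncoinc :: "nat \<Rightarrow> nat list \<Rightarrow> nat list \<Rightarrow> nat" where
  "ncoinc n b g = card {j. j < n \<and> b ! j = g ! j}"

text \<open>Decompositions are finite sets of (nonempty) intervals
  given by endpoint pairs, pairwise disjoint.\<close>
definition changes_sdepth ::
  "nat \<Rightarrow> nat \<Rightarrow> (nat list \<Rightarrow> nat list) \<Rightarrow> int \<Rightarrow> nat list \<Rightarrow> nat list \<Rightarrow> bool" where
  "changes_sdepth n n' \<phi> l g g' \<longleftrightarrow>
     mono_map n n' \<phi> \<and> length g = n \<and> length g' = n' \<and>
     vle (\<phi> g) g' \<and>
     (\<forall>a' b'. length a' = n' \<longrightarrow> length b' = n' \<longrightarrow>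
        intv n' a' b' \<subseteq> intv n' (zerov n') g' \<longrightarrow>
        (\<exists>F :: (nat list \<times> nat list) set. finite F \<and>
           (\<forall>(a, b) \<in> F. length a = n \<and> length b = n \<and> vle a b) \<and>
           (\<forall>p \<in> F. \<forall>q \<in> F. p \<noteq> q \<longrightarrow>
               intv n (fst p) (snd p) \<inter> intv n (fst q) (snd q) = {}) \<and>
           {c \<in> intv n (zerov n) g. \<phi> c \<in> intv n' a' b'} =
             (\<Union>(a, b) \<in> F. intv n a b) \<and>
           (\<forall>(a, b) \<in> F. int (ncoinc n b g) \<ge> int (ncoinc n' b' g') + l)))"

definition prod_map :: "nat \<Rightarrow> (nat list \<Rightarrow> nat list) \<Rightarrow> (nat list \<Rightarrow> nat list) \<Rightarrow> nat list \<Rightarrow> nat list" where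
  "prod_map n1 \<phi>1 \<phi>2 c = \<phi>1 (take n1 c) @ \<phi>2 (drop n1 c)"

end

theory Submission
  imports Defs
begin

text \<open>Intervals of \<open>\<nat>^(n1+n2)\<close> are products of intervals of the two factors, the
  preimage of a product interval \<open>[a1', b1'] \<times> [a2', b2']\<close> under \<open>(\<phi>1, \<phi>2)\<close> is the product
  of the two preimages, and the number of coordinates in which an upper corner reaches
  \<open>(g1, g2)\<close> is the sum of the counts for the two factors. So the products of the intervals
  of decompositions of the two preimages decompose the product preimage, and the gains
  \<open>\<ell>1\<close> and \<open>\<ell>2\<close> add. A nonempty interval inside \<open>[0, (g1', g2')]\<close> splits into factors inside
  \<open>[0, g1']\<close> and \<open>[0, g2']\<close>; an empty one is decomposed by the empty family.\<close>

definition interval_partition :: "nat \<Rightarrow> (nat list \<times> nat list) set \<Rightarrow> nat list set \<Rightarrow> bool" where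
  "interval_partition n F S \<longleftrightarrow> finite F \<and>
     (\<forall>(a, b) \<in> F. length a = n \<and> length b = n \<and> vle a b) \<and>
     (\<forall>p \<in> F. \<forall>q \<in> F. p \<noteq> q \<longrightarrow> intv n (fst p) (snd p) \<inter> intv n (fst q) (snd q) = {}) \<and>
     S = (\<Union>(a, b) \<in> F. intv n a b)"

lemma changes_sdepth_iff:
  "changes_sdepth n n' \<phi> l g g' \<longleftrightarrow>
     mono_map n n' \<phi> \<and> length g = n \<and> length g' = n' \<and> vle (\<phi> g) g' \<and>
     (\<forall>a' b'. length a' = n' \<longrightarrow> length b' = n' \<longrightarrow>
        intv n' a' b' \<subseteq> intv n' (zerov n') g' \<longrightarrow>
        (\<exists>F. interval_partition n F {c \<in> intv n (zerov n) g. \<phi> c \<in> intv n' a' b'} \<and>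
           (\<forall>(a, b) \<in> F. int (ncoinc n b g) \<ge> int (ncoinc n' b' g') + l)))"
  by (simp add: changes_sdepth_def interval_partition_def conj_assoc)

lemma vle_append:
  "length a1 = length b1 \<Longrightarrow> vle (a1 @ a2) (b1 @ b2) \<longleftrightarrow> vle a1 b1 \<and> vle a2 b2"
  unfolding vle_def by (simp add: list_all2_append)

lemma vle_refl: "vle a a"
  unfolding vle_def by (simp add: list_all2_refl)

lemma vle_trans: "vle a b \<Longrightarrow> vle b c \<Longrightarrow> vle a c"
  unfolding vle_def by (rule list_all2_trans[OF order_trans])

lemma vle_take_drop: "vle a b \<Longrightarrow> vle (take n a) (take n b) \<and> vle (drop n a) (drop n b)"
  unfolding vle_def by (auto intro: list_all2_takeI list_all2_dropI)

lemma intv_nonempty_imp_vle: "intv n a b \<noteq> {} \<Longrightarrow> vle a b"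
  unfolding intv_def using vle_trans by blast

lemma intv_length: "x \<in> intv n a b \<Longrightarrow> length x = n"
  by (simp add: intv_def)

lemma intv_subset_iff:
  assumes "length a = n" "length b = n" "vle a b"
  shows "intv n a b \<subseteq> intv n c d \<longleftrightarrow> vle c a \<and> vle b d"
proof
  assume "intv n a b \<subseteq> intv n c d"
  moreover have "a \<in> intv n a b" "b \<in> intv n a b"
    using assms by (simp_all add: intv_def vle_refl)
  ultimately show "vle c a \<and> vle b d" by (auto simp: intv_def)
qed (auto simp: intv_def dest: vle_trans)

lemma intv_append:
  assumes "length a1 = n1" "length b1 = n1"
  shows "c \<in> intv (n1 + n2) (a1 @ a2) (b1 @ b2) \<longleftrightarrow>
    length c = n1 + n2 \<and> take n1 c \<in> intv n1 a1 b1 \<and> drop n1 c \<in> intv n2 a2 b2"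
proof (cases "length c = n1 + n2")
  case True
  then have "vle (a1 @ a2) c \<longleftrightarrow> vle a1 (take n1 c) \<and> vle a2 (drop n1 c)"
    and "vle c (b1 @ b2) \<longleftrightarrow> vle (take n1 c) b1 \<and> vle (drop n1 c) b2"
    using assms vle_append[of a1 "take n1 c" a2 "drop n1 c"]
      vle_append[of "take n1 c" b1 "drop n1 c" b2] by simp_all
  with True show ?thesis by (auto simp: intv_def)
qed (auto simp: intv_def)

lemma intv_append_subset:
  assumes "length a1 = n1" "length b1 = n1" "length c1 = n1" "length d1 = n1"
    and "length a2 = n2" "length b2 = n2"
    and "intv (n1 + n2) (a1 @ a2) (b1 @ b2) \<noteq> {}"
    and "intv (n1 + n2) (a1 @ a2) (b1 @ b2) \<subseteq> intv (n1 + n2) (c1 @ c2) (d1 @ d2)"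
  shows "intv n1 a1 b1 \<subseteq> intv n1 c1 d1" "intv n2 a2 b2 \<subseteq> intv n2 c2 d2"
proof -
  have ab12: "vle (a1 @ a2) (b1 @ b2)" using assms(7) by (rule intv_nonempty_imp_vle)
  then have ab: "vle a1 b1" "vle a2 b2" using assms by (simp_all add: vle_append)
  have "vle (c1 @ c2) (a1 @ a2)" "vle (b1 @ b2) (d1 @ d2)"
    using assms(8) intv_subset_iff[of "a1 @ a2" "n1 + n2" "b1 @ b2"] assms(1,2,5,6) ab12
    by simp_all
  then have "vle c1 a1 \<and> vle c2 a2" "vle b1 d1 \<and> vle b2 d2"
    using assms(1-4) by (simp_all add: vle_append)
  then show "intv n1 a1 b1 \<subseteq> intv n1 c1 d1" "intv n2 a2 b2 \<subseteq> intv n2 c2 d2"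
    using assms ab intv_subset_iff by simp_all
qed

lemma length_zerov [simp]: "length (zerov n) = n"
  by (simp add: zerov_def)

lemma zerov_add: "zerov (n1 + n2) = zerov n1 @ zerov n2"
  by (simp add: zerov_def replicate_add)

lemma ncoinc_append:
  assumes "length b1 = n1" "length g1 = n1"
  shows "ncoinc (n1 + n2) (b1 @ b2) (g1 @ g2) = ncoinc n1 b1 g1 + ncoinc n2 b2 g2"
proof -
  let ?A = "{j. j < n1 \<and> b1 ! j = g1 ! j}" and ?B = "{j. j < n2 \<and> b2 ! j = g2 ! j}"
  have "{j. j < n1 + n2 \<and> (b1 @ b2) ! j = (g1 @ g2) ! j} = ?A \<union> (\<lambda>j. j + n1) ` ?B"
  proof (rule set_eqI)
    fix j
    show "j \<in> {j. j < n1 + n2 \<and> (b1 @ b2) ! j = (g1 @ g2) ! j} \<longleftrightarrow>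
        j \<in> ?A \<union> (\<lambda>j. j + n1) ` ?B"
    proof (cases "j < n1")
      case False
      then have "j \<in> (\<lambda>j. j + n1) ` ?B \<longleftrightarrow> j - n1 \<in> ?B"
        by (auto simp: image_iff intro: exI[of _ "j - n1"])
      with False assms show ?thesis by (auto simp: nth_append)
    qed (use assms in \<open>auto simp: nth_append\<close>)
  qed
  moreover have "?A \<inter> (\<lambda>j. j + n1) ` ?B = {}" by auto
  moreover have "card ((\<lambda>j. j + n1) ` ?B) = card ?B"
    by (rule card_image) (auto simp: inj_on_def)
  ultimately show ?thesis
    unfolding ncoinc_def by (simp add: card_Un_disjoint)
qed

definition append_pairs ::
  "(nat list \<times> nat list) set \<Rightarrow> (nat list \<times> nat list) set \<Rightarrow> (nat list \<times> nat list) set" where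
  "append_pairs F1 F2 = (\<lambda>((a1, b1), (a2, b2)). (a1 @ a2, b1 @ b2)) ` (F1 \<times> F2)"

lemma interval_partition_append:
  assumes P1: "interval_partition n1 F1 S1" and P2: "interval_partition n2 F2 S2"
  shows "interval_partition (n1 + n2) (append_pairs F1 F2)
           {c. length c = n1 + n2 \<and> take n1 c \<in> S1 \<and> drop n1 c \<in> S2}"
proof -
  have F1: "\<And>a b. (a, b) \<in> F1 \<Longrightarrow> length a = n1 \<and> length b = n1 \<and> vle a b"
    using P1 by (auto simp: interval_partition_def)
  have F2: "\<And>a b. (a, b) \<in> F2 \<Longrightarrow> length a = n2 \<and> length b = n2 \<and> vle a b"
    using P2 by (auto simp: interval_partition_def)
  have intv_F: "c \<in> intv (n1 + n2) (a1 @ a2) (b1 @ b2) \<longleftrightarrow>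
      length c = n1 + n2 \<and> take n1 c \<in> intv n1 a1 b1 \<and> drop n1 c \<in> intv n2 a2 b2"
    if "(a1, b1) \<in> F1" for a1 b1 a2 b2 c
    using F1[OF that] by (simp add: intv_append)
  have disj1: "p = q"
    if "p \<in> F1" "q \<in> F1" "x \<in> intv n1 (fst p) (snd p)" "x \<in> intv n1 (fst q) (snd q)" for p q x
    using P1 that unfolding interval_partition_def by blast
  have disj2: "p = q"
    if "p \<in> F2" "q \<in> F2" "x \<in> intv n2 (fst p) (snd p)" "x \<in> intv n2 (fst q) (snd q)" for p q x
    using P2 that unfolding interval_partition_def by blast
  have "finite (append_pairs F1 F2)"
    using P1 P2 by (simp add: interval_partition_def append_pairs_def)
  moreover have "\<forall>(a, b) \<in> append_pairs F1 F2. length a = n1 + n2 \<and> length b = n1 + n2 \<and> vle a b"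
    by (auto simp: append_pairs_def vle_append dest!: F1 F2)
  moreover have "\<forall>p \<in> append_pairs F1 F2. \<forall>q \<in> append_pairs F1 F2. p \<noteq> q \<longrightarrow>
      intv (n1 + n2) (fst p) (snd p) \<inter> intv (n1 + n2) (fst q) (snd q) = {}"
    unfolding append_pairs_def
    by (force simp: intv_F dest: disj1[of "(_, _)" "(_, _)"] disj2[of "(_, _)" "(_, _)"])
  moreover have "{c. length c = n1 + n2 \<and> take n1 c \<in> S1 \<and> drop n1 c \<in> S2} =
      (\<Union>(a, b) \<in> append_pairs F1 F2. intv (n1 + n2) a b)"
  proof -
    have "S1 = (\<Union>(a, b) \<in> F1. intv n1 a b)" "S2 = (\<Union>(a, b) \<in> F2. intv n2 a b)"
      using P1 P2 by (simp_all add: interval_partition_def)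
    then show ?thesis
      unfolding append_pairs_def by (auto simp: intv_F) (metis case_prod_conv)+
  qed
  ultimately show ?thesis unfolding interval_partition_def by blast
qed

lemma mono_map_prod_map:
  assumes "mono_map n1 n1' \<phi>1" "mono_map n2 n2' \<phi>2"
  shows "mono_map (n1 + n2) (n1' + n2') (prod_map n1 \<phi>1 \<phi>2)"
  unfolding mono_map_def
proof (intro conjI allI impI)
  fix a b :: "nat list"
  assume "length a = n1 + n2" "length b = n1 + n2" "vle a b"
  then have "vle (\<phi>1 (take n1 a)) (\<phi>1 (take n1 b))" "vle (\<phi>2 (drop n1 a)) (\<phi>2 (drop n1 b))"
    and "length (\<phi>1 (take n1 a)) = n1'"
    using assms vle_take_drop[of a b n1] unfolding mono_map_def by simp_all
  then show "vle (prod_map n1 \<phi>1 \<phi>2 a) (prod_map n1 \<phi>1 \<phi>2 b)"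
    unfolding prod_map_def using assms \<open>length b = n1 + n2\<close>
    by (simp add: vle_append mono_map_def)
qed (use assms in \<open>simp add: mono_map_def prod_map_def\<close>)

lemma prod_map_preimage_append:
  assumes "\<And>x. length x = n1 \<Longrightarrow> length (\<phi>1 x) = n1'"
    and "length g1 = n1" "length a1' = n1'" "length b1' = n1'"
  shows "{c \<in> intv (n1 + n2) (zerov (n1 + n2)) (g1 @ g2).
            prod_map n1 \<phi>1 \<phi>2 c \<in> intv (n1' + n2') (a1' @ a2') (b1' @ b2')} =
         {c. length c = n1 + n2 \<and>
            take n1 c \<in> {x \<in> intv n1 (zerov n1) g1. \<phi>1 x \<in> intv n1' a1' b1'} \<and>
            drop n1 c \<in> {x \<in> intv n2 (zerov n2) g2. \<phi>2 x \<in> intv n2' a2' b2'}}"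
proof -
  have "c \<in> intv (n1 + n2) (zerov (n1 + n2)) (g1 @ g2) \<longleftrightarrow>
      length c = n1 + n2 \<and> take n1 c \<in> intv n1 (zerov n1) g1 \<and> drop n1 c \<in> intv n2 (zerov n2) g2"
    for c
    using assms(2) intv_append[of "zerov n1" n1 g1 c n2 "zerov n2" g2]
    unfolding zerov_add by (simp add: zerov_def)
  moreover have "prod_map n1 \<phi>1 \<phi>2 c \<in> intv (n1' + n2') (a1' @ a2') (b1' @ b2') \<longleftrightarrow>
      \<phi>1 (take n1 c) \<in> intv n1' a1' b1' \<and> \<phi>2 (drop n1 c) \<in> intv n2' a2' b2'"
    if "length c = n1 + n2" for c
  proof -
    have "length (\<phi>1 (take n1 c)) = n1'" using that assms(1) by simp
    then have "take n1' (prod_map n1 \<phi>1 \<phi>2 c) = \<phi>1 (take n1 c)"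
      "drop n1' (prod_map n1 \<phi>1 \<phi>2 c) = \<phi>2 (drop n1 c)"
      "length (prod_map n1 \<phi>1 \<phi>2 c) = n1' + length (\<phi>2 (drop n1 c))"
      by (simp_all add: prod_map_def)
    then show ?thesis
      using intv_append[of a1' n1' b1' "prod_map n1 \<phi>1 \<phi>2 c" n2' a2' b2'] assms(3,4)
        intv_length[of "\<phi>2 (drop n1 c)" n2'] by auto
  qed
  ultimately show ?thesis by auto
qed

lemma product_box_preimage_partition:
  assumes C1: "changes_sdepth n1 n1' \<phi>1 l1 g1 g1'" and C2: "changes_sdepth n2 n2' \<phi>2 l2 g2 g2'"
    and "length a1' = n1'" "length b1' = n1'" "length a2' = n2'" "length b2' = n2'"
    and "intv n1' a1' b1' \<subseteq> intv n1' (zerov n1') g1'"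
    and "intv n2' a2' b2' \<subseteq> intv n2' (zerov n2') g2'"
  shows "\<exists>F. interval_partition (n1 + n2) F
           {c \<in> intv (n1 + n2) (zerov (n1 + n2)) (g1 @ g2).
              prod_map n1 \<phi>1 \<phi>2 c \<in> intv (n1' + n2') (a1' @ a2') (b1' @ b2')} \<and>
         (\<forall>(a, b) \<in> F. int (ncoinc (n1 + n2) b (g1 @ g2)) \<ge>
                         int (ncoinc (n1' + n2') (b1' @ b2') (g1' @ g2')) + (l1 + l2))"
proof -
  obtain F1 where F1: "interval_partition n1 F1 {c \<in> intv n1 (zerov n1) g1. \<phi>1 c \<in> intv n1' a1' b1'}"
    "\<forall>(a, b) \<in> F1. int (ncoinc n1 b g1) \<ge> int (ncoinc n1' b1' g1') + l1"
    using C1 assms unfolding changes_sdepth_iff by blast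
  obtain F2 where F2: "interval_partition n2 F2 {c \<in> intv n2 (zerov n2) g2. \<phi>2 c \<in> intv n2' a2' b2'}"
    "\<forall>(a, b) \<in> F2. int (ncoinc n2 b g2) \<ge> int (ncoinc n2' b2' g2') + l2"
    using C2 assms unfolding changes_sdepth_iff by blast
  have len: "\<And>x. length x = n1 \<Longrightarrow> length (\<phi>1 x) = n1'" "length g1 = n1" "length g1' = n1'"
    using C1 by (simp_all add: changes_sdepth_def mono_map_def)
  have "interval_partition (n1 + n2) (append_pairs F1 F2)
      {c \<in> intv (n1 + n2) (zerov (n1 + n2)) (g1 @ g2).
         prod_map n1 \<phi>1 \<phi>2 c \<in> intv (n1' + n2') (a1' @ a2') (b1' @ b2')}"
    using interval_partition_append[OF F1(1) F2(1)] prod_map_preimage_append[OF len(1,2) assms(3,4)]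
    by simp
  moreover have "int (ncoinc (n1 + n2) (b1 @ b2) (g1 @ g2)) \<ge>
      int (ncoinc (n1' + n2') (b1' @ b2') (g1' @ g2')) + (l1 + l2)"
    if "(a1, b1) \<in> F1" "(a2, b2) \<in> F2" for a1 b1 a2 b2
  proof -
    have "length b1 = n1" using F1(1) that(1) by (auto simp: interval_partition_def)
    then have "ncoinc (n1 + n2) (b1 @ b2) (g1 @ g2) = ncoinc n1 b1 g1 + ncoinc n2 b2 g2"
      "ncoinc (n1' + n2') (b1' @ b2') (g1' @ g2') = ncoinc n1' b1' g1' + ncoinc n2' b2' g2'"
      using len(2,3) assms(4) by (simp_all add: ncoinc_append)
    moreover have "int (ncoinc n1 b1 g1) \<ge> int (ncoinc n1' b1' g1') + l1"
      using F1(2) that(1) by auto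
    moreover have "int (ncoinc n2 b2 g2) \<ge> int (ncoinc n2' b2' g2') + l2"
      using F2(2) that(2) by auto
    ultimately show ?thesis by simp
  qed
  ultimately show ?thesis
    by (intro exI[of _ "append_pairs F1 F2"]) (auto simp: append_pairs_def)
qed

lemma product_preimage_partition:
  assumes C1: "changes_sdepth n1 n1' \<phi>1 l1 g1 g1'" and C2: "changes_sdepth n2 n2' \<phi>2 l2 g2 g2'"
    and len: "length a' = n1' + n2'" "length b' = n1' + n2'"
    and sub: "intv (n1' + n2') a' b' \<subseteq> intv (n1' + n2') (zerov (n1' + n2')) (g1' @ g2')"
  shows "\<exists>F. interval_partition (n1 + n2) F
           {c \<in> intv (n1 + n2) (zerov (n1 + n2)) (g1 @ g2).
              prod_map n1 \<phi>1 \<phi>2 c \<in> intv (n1' + n2') a' b'} \<and>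
         (\<forall>(a, b) \<in> F. int (ncoinc (n1 + n2) b (g1 @ g2)) \<ge>
                         int (ncoinc (n1' + n2') b' (g1' @ g2')) + (l1 + l2))"
proof (cases "intv (n1' + n2') a' b' = {}")
  case True
  then show ?thesis by (intro exI[of _ "{}"]) (simp add: interval_partition_def)
next
  case False
  have "length g1' = n1'" using C1 by (simp add: changes_sdepth_def)
  then have "intv n1' (take n1' a') (take n1' b') \<subseteq> intv n1' (zerov n1') g1'"
    "intv n2' (drop n1' a') (drop n1' b') \<subseteq> intv n2' (zerov n2') g2'"
    using intv_append_subset[of "take n1' a'" n1' "take n1' b'" "zerov n1'" g1' "drop n1' a'" n2'
        "drop n1' b'" "zerov n2'" g2'] False sub[unfolded zerov_add] len
    by simp_all
  then show ?thesis
    using product_box_preimage_partition[OF C1 C2,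
        of "take n1' a'" "take n1' b'" "drop n1' a'" "drop n1' b'"] len
    by simp
qed

theorem lemma3p4:
  fixes n1 n1' n2 n2' :: nat and \<phi>1 \<phi>2 :: "nat list \<Rightarrow> nat list"
    and l1 l2 :: int and g1 g1' g2 g2' :: "nat list"
  assumes "changes_sdepth n1 n1' \<phi>1 l1 g1 g1'"
    and "changes_sdepth n2 n2' \<phi>2 l2 g2 g2'"
  shows "changes_sdepth (n1 + n2) (n1' + n2') (prod_map n1 \<phi>1 \<phi>2) (l1 + l2)
           (g1 @ g2) (g1' @ g2')"
proof -
  have C1: "mono_map n1 n1' \<phi>1" "length g1 = n1" "length g1' = n1'" "vle (\<phi>1 g1) g1'"
    and C2: "mono_map n2 n2' \<phi>2" "length g2 = n2" "length g2' = n2'" "vle (\<phi>2 g2) g2'"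
    using assms by (simp_all add: changes_sdepth_def)
  have "length (\<phi>1 g1) = n1'" using C1 by (simp add: mono_map_def)
  then have "vle (prod_map n1 \<phi>1 \<phi>2 (g1 @ g2)) (g1' @ g2')"
    using C1 C2 by (simp add: prod_map_def vle_append)
  then show ?thesis
    using C1 C2 product_preimage_partition[OF assms] mono_map_prod_map[OF C1(1) C2(1)]
    unfolding changes_sdepth_iff by simp
qed

end
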